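(* Let $(\mathcal{E},\mathcal{L},\mathcal{B})$ be a weakly left resolving labelled space whose accommodating family $\mathcal{B}$ is closed under relative complements, let $S$ be its associated inverse semigroup, and let $\xi$ be a filter in $E(S)$ with word $\alpha\in\mathcal{L}^{\le\infty}$. If $\xi_n$ is an ultrafilter in $\mathcal{B}_{\alpha_{1,n}}$ for some $n$ with $0<n\le|\alpha|$, then $\xi_m$ is an ultrafilter in $\mathcal{B}_{\alpha_{1,m}}$ for every $0<m<n$; if moreover $\xi_0\neq\emptyset$, then $\xi_0$ is an ultrafilter in $\mathcal{B}$.
   Context: A directed graph $\mathcal{E}=(\mathcal{E}^0,\mathcal{E}^1,r,s)$ has countable nonempty vertex set, edge set, range/source maps; paths satisfy $r(\lambda_i)=s(\lambda_{i+1})$. A labelled graph has a surjective labelling $\mathcal{L}:\mathcal{E}^1\to\mathcal{A}$ extended letterwise to finite and infinite paths. $\omega$ is the empty word, $\mathcal{L}^+=\bigcup_{n\ge1}\mathcal{L}(\mathcal{E}^n)$, $\mathcal{L}^*=\{\omega\}\cup\mathcal{L}^+$, $\mathcal{L}^\infty$ the labels of infinite paths, $\mathcal{L}^{\le\infty}=\mathcal{L}^*\cup\mathcal{L}^\infty$; $\alpha_{i,j}=\alpha_i\cdots\alpha_j$, $\alpha_{1,0}=\omega$. For $A\subseteq\mathcal{E}^0$, $\alpha\in\mathcal{L}^+$: $r(A,\alpha)=\{r(\lambda):\mathcal{L}(\lambda)=\alpha,\ s(\lambda)\in A\}$, $r(A,\omega)=A$, $r(\alpha)=r(\mathcal{E}^0,\alpha)$.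 $\mathcal{B}$ accommodating: closed under $r(\cdot,\alpha)$, finite intersections and unions, contains $r(\alpha)$ for $\alpha\in\mathcal{L}^+$; labelled space weakly left resolving if $r(A\cap B,\alpha)=r(A,\alpha)\cap r(B,\alpha)$ for $A,B\in\mathcal{B}$, $\alpha\in\mathcal{L}^+$. $\mathcal{B}_\alpha=\mathcal{B}\cap\mathcal{P}(r(\alpha))$, $\mathcal{B}_\omega=\mathcal{B}$. $S$ = triples $(\alpha,A,\beta)$, $\alpha,\beta\in\mathcal{L}^*$, $\emptyset\ne A\in\mathcal{B}_\alpha\cap\mathcal{B}_\beta$, plus $0$; product $(\alpha,A,\beta)(\gamma,B,\delta)=(\alpha\gamma',r(A,\gamma')\cap B,\delta)$ if $\gamma=\beta\gamma'$, $=(\alpha,A\cap r(B,\beta'),\delta\beta')$ if $\beta=\gamma\beta'$, $=0$ otherwise (empty middle entry identified with $0$). $E(S)=\{(\alpha,A,\alpha)\}\cup\{0\}$ with $p\le q$ iff $pq=p$. A filter in a poset with least element $0$ is a nonempty upward-closed subset not containing $0$ in which any two elements have a common lower bound in it; an ultrafilter is a maximal filter; filters in $\mathcal{B}_\alpha$ are under inclusion. The words of elements of a filter $\xi$ in $E(S)$ are pairwise comparable; the word of $\xi$ is the longest one if it exists ($\alpha\in\mathcal{L}^*$), and otherwise the unique $\alpha\in\mathcal{L}^\infty$ such that all elements of $\xi$ are of the form $(\alpha_{1,n},A,\alpha_{1,n})$. For $0\le n\le|\alpha|$ ($n$ finite), $\xi_n=\{A\in\mathcal{B}:(\alpha_{1,n},A,\alpha_{1,n})\in\xi\}$.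 *)

theory Defs
  imports Main "HOL-Library.Countable_Set" "HOL-Library.Extended_Nat"
begin

record ('v,'e,'a) lgraph =
  verts :: "'v set"
  edges :: "'e set"
  rng   :: "'e \<Rightarrow> 'v"
  src   :: "'e \<Rightarrow> 'v"
  lbl   :: "'e \<Rightarrow> 'a"  (* labelling; the alphabet is its image lbl ` edges *)

definition is_graph :: "('v,'e,'a) lgraph \<Rightarrow> bool" where
  "is_graph G \<longleftrightarrow> countable (verts G) \<and> verts G \<noteq> {} \<and> countable (edges G) \<and>
     (\<forall>e\<in>edges G. rng G e \<in> verts G \<and> src G e \<in> verts G)"

definition is_path :: "('v,'e,'a) lgraph \<Rightarrow> 'e list \<Rightarrow> bool" where
  "is_path G p \<longleftrightarrow> p \<noteq> [] \<and> set p \<subseteq> edges G \<and>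
     (\<forall>i. Suc i < length p \<longrightarrow> rng G (p ! i) = src G (p ! Suc i))"

definition Lplus :: "('v,'e,'a) lgraph \<Rightarrow> 'a list set" where
  "Lplus G = {map (lbl G) p | p. is_path G p}"

definition Lstar :: "('v,'e,'a) lgraph \<Rightarrow> 'a list set" where
  "Lstar G = insert [] (Lplus G)"

definition Linf :: "('v,'e,'a) lgraph \<Rightarrow> (nat \<Rightarrow> 'a) set" where
  "Linf G = {lbl G \<circ> p | p. (\<forall>i. p i \<in> edges G) \<and> (\<forall>i. rng G (p i) = src G (p (Suc i)))}"

definition rset :: "('v,'e,'a) lgraph \<Rightarrow> 'v set \<Rightarrow> 'a list \<Rightarrow> 'v set" where
  "rset G A w = (if w = [] then A else
      {rng G (last p) | p. is_path G p \<and> map (lbl G) p = w \<and> src G (hd p) \<in> A})"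

definition rword :: "('v,'e,'a) lgraph \<Rightarrow> 'a list \<Rightarrow> 'v set" where
  "rword G w = rset G (verts G) w"

definition accommodating :: "('v,'e,'a) lgraph \<Rightarrow> 'v set set \<Rightarrow> bool" where
  "accommodating G B \<longleftrightarrow> B \<subseteq> Pow (verts G) \<and>
     (\<forall>A\<in>B. \<forall>w\<in>Lplus G. rset G A w \<in> B) \<and>
     (\<forall>A\<in>B. \<forall>C\<in>B. A \<inter> C \<in> B \<and> A \<union> C \<in> B) \<and>
     (\<forall>w\<in>Lplus G. rword G w \<in> B)"

definition labelled_space :: "('v,'e,'a) lgraph \<Rightarrow> 'v set set \<Rightarrow> bool" where
  "labelled_space G B \<longleftrightarrow> is_graph G \<and> accommodating G B"

definition weakly_left_resolving :: "('v,'e,'a) lgraph \<Rightarrow> 'v set set \<Rightarrow> bool" where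
  "weakly_left_resolving G B \<longleftrightarrow>
     (\<forall>A\<in>B. \<forall>C\<in>B. \<forall>w\<in>Lplus G. rset G (A \<inter> C) w = rset G A w \<inter> rset G C w)"

definition closed_rel_compl :: "'v set set \<Rightarrow> bool" where
  "closed_rel_compl B \<longleftrightarrow> (\<forall>A\<in>B. \<forall>C\<in>B. A - C \<in> B)"

definition Bsub :: "('v,'e,'a) lgraph \<Rightarrow> 'v set set \<Rightarrow> 'a list \<Rightarrow> 'v set set" where
  "Bsub G B w = (if w = [] then B else B \<inter> Pow (rword G w))"

text \<open>Elements of S: None is 0, Some (alpha, A, beta) a triple.\<close>
type_synonym ('v,'a) selt = "('a list \<times> 'v set \<times> 'a list) option"

definition S_carrier :: "('v,'e,'a) lgraph \<Rightarrow> 'v set set \<Rightarrow> ('v,'a) selt set" where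
  "S_carrier G B = insert None
     {Some (a, A, b) | a A b. a \<in> Lstar G \<and> b \<in> Lstar G \<and> A \<noteq> {} \<and>
        A \<in> Bsub G B a \<and> A \<in> Bsub G B b}"

definition mkS :: "'a list \<Rightarrow> 'v set \<Rightarrow> 'a list \<Rightarrow> ('v,'a) selt" where
  "mkS a A b = (if A = {} then None else Some (a, A, b))"

fun S_mult :: "('v,'e,'a) lgraph \<Rightarrow> ('v,'a) selt \<Rightarrow> ('v,'a) selt \<Rightarrow> ('v,'a) selt" where
  "S_mult G (Some (a, A, b)) (Some (c, C, d)) =
     (if take (length b) c = b then
        (let c' = drop (length b) c in mkS (a @ c') (rset G A c' \<inter> C) d)
      else if take (length c) b = c then
        (let b' = drop (length c) b in mkS a (A \<inter> rset G C b') (d @ b'))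
      else None)"
| "S_mult G _ _ = None"

definition ES :: "('v,'e,'a) lgraph \<Rightarrow> 'v set set \<Rightarrow> ('v,'a) selt set" where
  "ES G B = {p \<in> S_carrier G B. p = None \<or> (\<exists>a A. p = Some (a, A, a))}"

definition ES_le :: "('v,'e,'a) lgraph \<Rightarrow> ('v,'a) selt \<Rightarrow> ('v,'a) selt \<Rightarrow> bool" where
  "ES_le G p q \<longleftrightarrow> S_mult G p q = p"

definition is_filter :: "'x set \<Rightarrow> ('x \<Rightarrow> 'x \<Rightarrow> bool) \<Rightarrow> 'x \<Rightarrow> 'x set \<Rightarrow> bool" where
  "is_filter P le z F \<longleftrightarrow> F \<subseteq> P \<and> F \<noteq> {} \<and> z \<notin> F \<and>
     (\<forall>x\<in>F. \<forall>y\<in>P. le x y \<longrightarrow> y \<in> F) \<and>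
     (\<forall>x\<in>F. \<forall>y\<in>F. \<exists>u\<in>F. le u x \<and> le u y)"

definition is_ultrafilter :: "'x set \<Rightarrow> ('x \<Rightarrow> 'x \<Rightarrow> bool) \<Rightarrow> 'x \<Rightarrow> 'x set \<Rightarrow> bool" where
  "is_ultrafilter P le z F \<longleftrightarrow> is_filter P le z F \<and>
     (\<forall>F'. is_filter P le z F' \<and> F \<subseteq> F' \<longrightarrow> F' = F)"

definition filter_ES :: "('v,'e,'a) lgraph \<Rightarrow> 'v set set \<Rightarrow> ('v,'a) selt set \<Rightarrow> bool" where
  "filter_ES G B \<xi> \<longleftrightarrow> is_filter (ES G B) (ES_le G) None \<xi>"

definition ultrafilter_B :: "('v,'e,'a) lgraph \<Rightarrow> 'v set set \<Rightarrow> 'a list \<Rightarrow> 'v set set \<Rightarrow> bool" where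
  "ultrafilter_B G B w F \<longleftrightarrow> is_ultrafilter (Bsub G B w) (\<subseteq>) {} F"

datatype 'a lword = Fin "'a list" | Inf "nat \<Rightarrow> 'a"

fun wlen :: "'a lword \<Rightarrow> enat" where
  "wlen (Fin xs) = enat (length xs)"
| "wlen (Inf f) = \<infinity>"

fun wprefix :: "'a lword \<Rightarrow> nat \<Rightarrow> 'a list" where
  "wprefix (Fin xs) n = take n xs"
| "wprefix (Inf f) n = map f [0..<n]"

definition elem_words :: "('v,'a) selt set \<Rightarrow> 'a list set" where
  "elem_words \<xi> = {a | a A b. Some (a, A, b) \<in> \<xi>}"

definition is_word_of :: "('v,'e,'a) lgraph \<Rightarrow> ('v,'a) selt set \<Rightarrow> 'a lword \<Rightarrow> bool" where
  "is_word_of G \<xi> w \<longleftrightarrow>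
     (if \<exists>a\<in>elem_words \<xi>. \<forall>b\<in>elem_words \<xi>. length b \<le> length a
      then w = Fin (THE a. a \<in> elem_words \<xi> \<and> (\<forall>b\<in>elem_words \<xi>. length b \<le> length a))
      else (\<exists>f. w = Inf f \<and> f \<in> Linf G \<and>
              (\<forall>p\<in>\<xi>. \<exists>n A. p = Some (map f [0..<n], A, map f [0..<n]))))"

definition xi_n :: "('v,'e,'a) lgraph \<Rightarrow> 'v set set \<Rightarrow> ('v,'a) selt set \<Rightarrow> 'a lword \<Rightarrow> nat \<Rightarrow> 'v set set" where
  "xi_n G B \<xi> w n = {A \<in> B. Some (wprefix w n, A, wprefix w n) \<in> \<xi>}"

end

theory Submission
  imports Defs
begin

text \<open>
  Write \<open>\<xi>\<^sub>a = {A. (a, A, a) \<in> \<xi>}\<close>. In \<open>E(S)\<close> one has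
  \<open>(a x, A, a x) \<le> (a, D, a)\<close> iff \<open>A \<subseteq> r(D, x)\<close>, so \<open>\<xi>\<^sub>a\<close> is a filter whenever it is
  nonempty, and \<open>r(D, x) \<in> \<xi>\<^sub>a\<^sub>x\<close> implies \<open>D \<in> \<xi>\<^sub>a\<close>. For maximality of \<open>\<xi>\<^sub>a\<close> it suffices
  that every \<open>D\<close> meeting all of \<open>\<xi>\<^sub>a\<close> lies in \<open>\<xi>\<^sub>a\<close>. Such a \<open>r(D, x)\<close> meets all of
  \<open>\<xi>\<^sub>a\<^sub>x\<close>: otherwise, for \<open>E \<in> \<xi>\<^sub>a\<close>, the element \<open>r(E, x) \<inter> A\<close> of \<open>\<xi>\<^sub>a\<^sub>x\<close> lies in
  \<open>r(E - D, x)\<close>, forcing \<open>E - D \<in> \<xi>\<^sub>a\<close>, which misses \<open>D\<close>. Since \<open>\<xi>\<^sub>a\<^sub>x\<close> is an ultrafilter,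
  \<open>r(D, x) \<in> \<xi>\<^sub>a\<^sub>x\<close>, hence \<open>D \<in> \<xi>\<^sub>a\<close>. For a nonempty prefix \<open>a\<close>, \<open>\<xi>\<^sub>a\<close> contains \<open>r(a)\<close>.
\<close>

lemma is_path_append:
  assumes "is_path G p" "is_path G q" "rng G (last p) = src G (hd q)"
  shows "is_path G (p @ q)"
  unfolding is_path_def
proof (intro conjI allI impI)
  show "p @ q \<noteq> []" "set (p @ q) \<subseteq> edges G" using assms(1,2) by (auto simp: is_path_def)
  fix i assume i: "Suc i < length (p @ q)"
  have ne: "p \<noteq> []" "q \<noteq> []" using assms(1,2) by (auto simp: is_path_def)
  consider "Suc i < length p" | "Suc i = length p" | "Suc i > length p" by linarith
  then show "rng G ((p @ q) ! i) = src G ((p @ q) ! Suc i)"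
  proof cases
    case 1
    then show ?thesis using assms(1) by (simp add: is_path_def nth_append)
  next
    case 2
    then have "i = length p - 1" by simp
    then have "(p @ q) ! i = last p" "(p @ q) ! Suc i = hd q"
      using 2 ne by (simp_all add: nth_append last_conv_nth hd_conv_nth)
    then show ?thesis using assms(3) by simp
  next
    case 3
    then have "Suc (i - length p) < length q" "Suc i - length p = Suc (i - length p)"
      using i by simp_all
    then show ?thesis using 3 assms(2) by (simp add: is_path_def nth_append)
  qed
qed

lemma is_path_take: "is_path G p \<Longrightarrow> 0 < k \<Longrightarrow> is_path G (take k p)"
  unfolding is_path_def by (auto dest: in_set_takeD)

lemma is_path_drop: "is_path G p \<Longrightarrow> k < length p \<Longrightarrow> is_path G (drop k p)"
  unfolding is_path_def by (auto dest: in_set_dropD simp: add.commute)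

lemma is_path_split:
  assumes "is_path G p" "map (lbl G) p = b @ c" "b \<noteq> []" "c \<noteq> []"
  obtains p\<^sub>1 p\<^sub>2 where "p = p\<^sub>1 @ p\<^sub>2" "is_path G p\<^sub>1" "is_path G p\<^sub>2"
    "map (lbl G) p\<^sub>1 = b" "map (lbl G) p\<^sub>2 = c" "rng G (last p\<^sub>1) = src G (hd p\<^sub>2)"
proof
  define k where "k = length b"
  have len: "length p = k + length c" unfolding k_def using assms(2) by (metis length_append length_map)
  have k: "0 < k" "k < length p" using assms(3,4) len unfolding k_def by auto
  show "p = take k p @ drop k p" by simp
  show "is_path G (take k p)" "is_path G (drop k p)"
    using is_path_take[OF assms(1)] is_path_drop[OF assms(1)] k by auto
  show "map (lbl G) (take k p) = b" "map (lbl G) (drop k p) = c"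
    unfolding k_def using assms(2) by (metis append_eq_conv_conj take_map drop_map)+
  have "last (take k p) = p ! (k - 1)"
    using k take_Suc_conv_app_nth[of "k - 1" p] by simp
  moreover have "hd (drop k p) = p ! Suc (k - 1)"
    using k by (simp add: hd_drop_conv_nth)
  ultimately
  show "rng G (last (take k p)) = src G (hd (drop k p))"
    using assms(1) k unfolding is_path_def by simp
qed

lemma Lstar_appendD: "u @ v \<in> Lstar G \<Longrightarrow> u \<in> Lstar G \<and> v \<in> Lstar G"
proof -
  have "u \<in> Lplus G \<and> v \<in> Lplus G" if uv: "u @ v \<in> Lplus G" "u \<noteq> []" "v \<noteq> []"
  proof -
    obtain p where "is_path G p" "map (lbl G) p = u @ v" using uv(1) by (auto simp: Lplus_def)
    then obtain p\<^sub>1 p\<^sub>2 where "is_path G p\<^sub>1" "is_path G p\<^sub>2" "map (lbl G) p\<^sub>1 = u" "map (lbl G) p\<^sub>2 = v"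
      using uv(2,3) by (rule is_path_split)
    then show ?thesis unfolding Lplus_def by blast
  qed
  then show "u @ v \<in> Lstar G \<Longrightarrow> u \<in> Lstar G \<and> v \<in> Lstar G"
    by (cases "u = []"; cases "v = []") (auto simp: Lstar_def)
qed

lemma rset_memI:
  "is_path G p \<Longrightarrow> src G (hd p) \<in> A \<Longrightarrow> rng G (last p) \<in> rset G A (map (lbl G) p)"
  unfolding rset_def is_path_def by auto

lemma rset_memE:
  assumes "v \<in> rset G A w" "w \<noteq> []"
  obtains p where "is_path G p" "map (lbl G) p = w" "src G (hd p) \<in> A" "v = rng G (last p)"
  using assms unfolding rset_def by auto

lemma rset_Nil [simp]: "rset G A [] = A"
  by (simp add: rset_def)

lemma rset_empty [simp]: "rset G {} w = {}"
  by (simp add: rset_def)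

lemma rset_mono: "A \<subseteq> C \<Longrightarrow> rset G A w \<subseteq> rset G C w"
  by (auto simp: rset_def)

lemma rset_Un: "rset G (A \<union> C) w = rset G A w \<union> rset G C w"
  by (auto simp: rset_def)

lemma rset_append: "rset G A (b @ c) = rset G (rset G A b) c"
proof (cases "b = [] \<or> c = []")
  case False
  show ?thesis
  proof
    show "rset G A (b @ c) \<subseteq> rset G (rset G A b) c"
    proof
      fix v assume "v \<in> rset G A (b @ c)"
      then obtain p where p: "is_path G p" "map (lbl G) p = b @ c" "src G (hd p) \<in> A"
          "v = rng G (last p)"
        using False by (auto elim: rset_memE)
      obtain p\<^sub>1 p\<^sub>2 where split: "p = p\<^sub>1 @ p\<^sub>2" "is_path G p\<^sub>1" "is_path G p\<^sub>2"
          "map (lbl G) p\<^sub>1 = b" "map (lbl G) p\<^sub>2 = c" "rng G (last p\<^sub>1) = src G (hd p\<^sub>2)"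
        using is_path_split[OF p(1,2)] False by blast
      have ne: "p\<^sub>1 \<noteq> []" "p\<^sub>2 \<noteq> []" using split(2,3) by (auto simp: is_path_def)
      have "src G (hd p\<^sub>2) \<in> rset G A b"
        using rset_memI[OF split(2)] split(1,4,6) p(3) ne by auto
      then show "v \<in> rset G (rset G A b) c"
        using rset_memI[OF split(3)] split(1,5) p(4) ne by auto
    qed
    show "rset G (rset G A b) c \<subseteq> rset G A (b @ c)"
    proof
      fix v assume "v \<in> rset G (rset G A b) c"
      then obtain q where q: "is_path G q" "map (lbl G) q = c" "src G (hd q) \<in> rset G A b"
          "v = rng G (last q)"
        using False by (auto elim: rset_memE)
      then obtain p where p: "is_path G p" "map (lbl G) p = b" "src G (hd p) \<in> A"
          "src G (hd q) = rng G (last p)"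
        using False by (auto elim: rset_memE)
      have "p \<noteq> []" "q \<noteq> []" using p(1) q(1) by (auto simp: is_path_def)
      then show "v \<in> rset G A (b @ c)"
        using rset_memI[OF is_path_append[OF p(1) q(1)]] p q by auto
    qed
  qed
qed auto

lemma rword_append: "rword G (b @ c) = rset G (rword G b) c"
  unfolding rword_def by (rule rset_append)

lemma Bsub_iff: "labelled_space G B \<Longrightarrow> X \<in> Bsub G B w \<longleftrightarrow> X \<in> B \<and> X \<subseteq> rword G w"
  unfolding labelled_space_def accommodating_def Bsub_def rword_def by auto

lemma rset_in_B: "labelled_space G B \<Longrightarrow> A \<in> B \<Longrightarrow> w \<in> Lstar G \<Longrightarrow> rset G A w \<in> B"
  unfolding labelled_space_def accommodating_def Lstar_def by auto

lemma rword_in_B: "labelled_space G B \<Longrightarrow> w \<in> Lplus G \<Longrightarrow> rword G w \<in> B"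
  unfolding labelled_space_def accommodating_def by auto

lemma Int_in_B: "labelled_space G B \<Longrightarrow> A \<in> B \<Longrightarrow> C \<in> B \<Longrightarrow> A \<inter> C \<in> B"
  unfolding labelled_space_def accommodating_def by auto

lemma Bsub_Int_closed:
  "labelled_space G B \<Longrightarrow> X \<in> Bsub G B w \<Longrightarrow> Z \<in> Bsub G B w \<Longrightarrow> X \<inter> Z \<in> Bsub G B w"
  by (auto simp: Bsub_iff intro: Int_in_B)

lemma rset_Int:
  "weakly_left_resolving G B \<Longrightarrow> A \<in> B \<Longrightarrow> C \<in> B \<Longrightarrow> w \<in> Lstar G
   \<Longrightarrow> rset G (A \<inter> C) w = rset G A w \<inter> rset G C w"
  unfolding weakly_left_resolving_def Lstar_def by auto

lemma ES_le_SomeI: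
  assumes "C \<noteq> {}" "C \<subseteq> rset G A y"
  shows "ES_le G (Some (a @ y, C, a @ y)) (Some (a, A, a))"
proof (cases "y = []")
  case True
  have "S_mult G (Some (a, C, a)) (Some (a, A, a)) = mkS a (C \<inter> A) a"
    by (simp add: Let_def)
  also have "\<dots> = Some (a, C, a)" using assms True by (auto simp: mkS_def Int_absorb2)
  finally show ?thesis using True by (simp add: ES_le_def)
next
  case False
  then have "take (length (a @ y)) a \<noteq> a @ y" by simp
  then have "S_mult G (Some (a @ y, C, a @ y)) (Some (a, A, a))
      = mkS (a @ y) (C \<inter> rset G A y) (a @ y)"
    by (simp add: Let_def)
  also have "\<dots> = Some (a @ y, C, a @ y)" using assms by (auto simp: mkS_def Int_absorb2)
  finally show ?thesis by (simp add: ES_le_def)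
qed

lemma ES_le_SomeE:
  assumes "ES_le G (Some (b, C, b)) (Some (a, A, a))"
  obtains y where "b = a @ y" "C \<subseteq> rset G A y"
proof (cases "take (length b) a = b")
  case True
  then have "mkS (b @ drop (length b) a) (rset G C (drop (length b) a) \<inter> A) a = Some (b, C, b)"
    using assms by (simp add: ES_le_def Let_def)
  then have "a = b" "C \<subseteq> A" by (auto simp: mkS_def split: if_splits)
  then show ?thesis using that[of "[]"] by simp
next
  case False
  then have "take (length a) b = a"
    using assms by (auto simp: ES_le_def split: if_splits)
  moreover from this False have
    "mkS b (C \<inter> rset G A (drop (length a) b)) (a @ drop (length a) b) = Some (b, C, b)"
    using assms by (simp add: ES_le_def Let_def)
  then have "C \<subseteq> rset G A (drop (length a) b)" by (auto simp: mkS_def split: if_splits)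
  ultimately show ?thesis using that by (metis append_take_drop_id)
qed

lemma filter_ES_memD:
  assumes "filter_ES G B \<xi>" "u \<in> \<xi>"
  obtains c E where "u = Some (c, E, c)" "c \<in> Lstar G" "E \<noteq> {}" "E \<in> Bsub G B c"
  using assms unfolding filter_ES_def is_filter_def ES_def S_carrier_def by blast

lemma filter_ES_SomeD:
  "filter_ES G B \<xi> \<Longrightarrow> Some (c, E, c) \<in> \<xi> \<Longrightarrow> c \<in> Lstar G \<and> E \<noteq> {} \<and> E \<in> Bsub G B c"
  by (erule filter_ES_memD) auto

lemma filter_ES_upward:
  assumes filt: "filter_ES G B \<xi>" and A: "Some (a @ x, A, a @ x) \<in> \<xi>"
    and D: "D \<in> Bsub G B a" and sub: "A \<subseteq> rset G D x"
  shows "Some (a, D, a) \<in> \<xi>"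
proof -
  have A': "a @ x \<in> Lstar G" "A \<noteq> {}" using filter_ES_SomeD[OF filt A] by auto
  then have "D \<noteq> {}" using sub by auto
  then have "Some (a, D, a) \<in> ES G B"
    using D Lstar_appendD[OF A'(1)] unfolding ES_def S_carrier_def by blast
  moreover have "ES_le G (Some (a @ x, A, a @ x)) (Some (a, D, a))"
    using ES_le_SomeI[OF A'(2) sub] .
  ultimately show ?thesis using filt A unfolding filter_ES_def is_filter_def by blast
qed

lemma filter_ES_rset_Int:
  assumes ls: "labelled_space G B" and wlr: "weakly_left_resolving G B" and filt: "filter_ES G B \<xi>"
    and D: "Some (a, D, a) \<in> \<xi>" and A: "Some (a @ x, A, a @ x) \<in> \<xi>"
  shows "Some (a @ x, rset G D x \<inter> A, a @ x) \<in> \<xi>"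
proof -
  obtain u where u: "u \<in> \<xi>" "ES_le G u (Some (a, D, a))" "ES_le G u (Some (a @ x, A, a @ x))"
    using filt D A unfolding filter_ES_def is_filter_def by blast
  obtain c E where cE: "u = Some (c, E, c)" "c \<in> Lstar G" "E \<noteq> {}"
    using filt u(1) by (rule filter_ES_memD)
  obtain y\<^sub>1 where y\<^sub>1: "c = a @ y\<^sub>1" "E \<subseteq> rset G D y\<^sub>1"
    using u(2) cE(1) by (auto elim: ES_le_SomeE)
  obtain y where y: "c = (a @ x) @ y" "E \<subseteq> rset G A y"
    using u(3) cE(1) by (auto elim: ES_le_SomeE)
  have DA: "D \<in> B" "A \<in> B" "A \<subseteq> rword G (a @ x)" "a @ x \<in> Lstar G"
    using filter_ES_SomeD[OF filt D] filter_ES_SomeD[OF filt A] Bsub_iff[OF ls] by auto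
  have xy: "x \<in> Lstar G" "y \<in> Lstar G"
    using Lstar_appendD[OF DA(4)] Lstar_appendD[of "a @ x" y G] cE(2) y(1) by auto
  have rD: "rset G D x \<in> B" using rset_in_B[OF ls DA(1) xy(1)] .
  have "E \<subseteq> rset G (rset G D x) y \<inter> rset G A y"
    using y y\<^sub>1 rset_append[of G D x y] by auto
  then have E: "E \<subseteq> rset G (rset G D x \<inter> A) y"
    using rset_Int[OF wlr rD DA(2) xy(2)] by simp
  have Z: "rset G D x \<inter> A \<noteq> {}" "rset G D x \<inter> A \<in> Bsub G B (a @ x)"
    using E cE(3) Int_in_B[OF ls rD DA(2)] DA(3) Bsub_iff[OF ls] by auto
  have "Some (a @ x, rset G D x \<inter> A, a @ x) \<in> ES G B"
    using Z DA(4) unfolding ES_def S_carrier_def by blast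
  moreover have "ES_le G u (Some (a @ x, rset G D x \<inter> A, a @ x))"
    using ES_le_SomeI[OF cE(3) E, of "a @ x"] cE(1) y(1) by simp
  ultimately show ?thesis using filt u(1) unfolding filter_ES_def is_filter_def by blast
qed

definition ES_section :: "'v set set \<Rightarrow> ('v,'a) selt set \<Rightarrow> 'a list \<Rightarrow> 'v set set" where
  "ES_section B \<xi> a = {A \<in> B. Some (a, A, a) \<in> \<xi>}"

lemma xi_n_eq_ES_section: "xi_n G B \<xi> \<alpha> n = ES_section B \<xi> (wprefix \<alpha> n)"
  by (simp add: xi_n_def ES_section_def)

lemma ES_section_Int:
  assumes ls: "labelled_space G B" and wlr: "weakly_left_resolving G B" and filt: "filter_ES G B \<xi>"
    and Z: "Z \<in> ES_section B \<xi> a" and Y: "Y \<in> ES_section B \<xi> a"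
  shows "Z \<inter> Y \<in> ES_section B \<xi> a"
proof -
  have "Some (a @ [], rset G Z [] \<inter> Y, a @ []) \<in> \<xi>"
    using filter_ES_rset_Int[OF ls wlr filt, of a Z "[]" Y] Z Y unfolding ES_section_def by simp
  then show ?thesis using Int_in_B[OF ls] Z Y unfolding ES_section_def by simp
qed

lemma ES_section_upward:
  assumes ls: "labelled_space G B" and filt: "filter_ES G B \<xi>"
    and Z: "Z \<in> ES_section B \<xi> a" and Y: "Y \<in> Bsub G B a" and "Z \<subseteq> Y"
  shows "Y \<in> ES_section B \<xi> a"
proof -
  have "Some (a, Y, a) \<in> \<xi>"
    using filter_ES_upward[OF filt, of a "[]" Z Y] Z Y \<open>Z \<subseteq> Y\<close> unfolding ES_section_def by simp
  then show ?thesis using Y Bsub_iff[OF ls] unfolding ES_section_def by simp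
qed

lemma filter_ES_section_is_filter:
  assumes ls: "labelled_space G B" and wlr: "weakly_left_resolving G B" and filt: "filter_ES G B \<xi>"
    and ne: "ES_section B \<xi> a \<noteq> {}"
  shows "is_filter (Bsub G B a) (\<subseteq>) {} (ES_section B \<xi> a)"
  unfolding is_filter_def
proof (intro conjI ballI impI)
  have "Z \<in> Bsub G B a \<and> Z \<noteq> {}" if "Z \<in> ES_section B \<xi> a" for Z
    using that filter_ES_SomeD[OF filt, of a Z] unfolding ES_section_def by simp
  then show "ES_section B \<xi> a \<subseteq> Bsub G B a" "{} \<notin> ES_section B \<xi> a" by blast+
  show "ES_section B \<xi> a \<noteq> {}" by (fact ne)
next
  fix Z Y assume "Z \<in> ES_section B \<xi> a" "Y \<in> Bsub G B a" "Z \<subseteq> Y"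
  then show "Y \<in> ES_section B \<xi> a" by (rule ES_section_upward[OF ls filt])
next
  fix Z Y assume "Z \<in> ES_section B \<xi> a" "Y \<in> ES_section B \<xi> a"
  then have "Z \<inter> Y \<in> ES_section B \<xi> a" by (rule ES_section_Int[OF ls wlr filt])
  then show "\<exists>u\<in>ES_section B \<xi> a. u \<subseteq> Z \<and> u \<subseteq> Y" by (intro bexI[of _ "Z \<inter> Y"]) auto
qed

lemma ultrafilter_mem_if_meets:
  assumes uf: "is_ultrafilter P (\<subseteq>) {} F" and Y: "Y \<in> P"
    and Int_closed: "\<And>X Z. X \<in> P \<Longrightarrow> Z \<in> P \<Longrightarrow> X \<inter> Z \<in> P"
    and meets: "\<And>A. A \<in> F \<Longrightarrow> Y \<inter> A \<noteq> {}"
  shows "Y \<in> F"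
proof -
  have f: "F \<subseteq> P" "F \<noteq> {}" "\<forall>X\<in>F. \<forall>Z\<in>F. \<exists>u\<in>F. u \<subseteq> X \<and> u \<subseteq> Z"
    using uf unfolding is_ultrafilter_def is_filter_def by auto
  define F' where "F' = {Z \<in> P. \<exists>A\<in>F. Y \<inter> A \<subseteq> Z}"
  have F_sub: "F \<subseteq> F'" using f(1) unfolding F'_def by auto
  have "is_filter P (\<subseteq>) {} F'"
    unfolding is_filter_def
  proof (intro conjI ballI impI)
    show "F' \<subseteq> P" unfolding F'_def by auto
    show "F' \<noteq> {}" using F_sub f(2) by auto
    show "{} \<notin> F'" using meets unfolding F'_def by auto
  next
    fix X Z assume "X \<in> F'" "Z \<in> P" "X \<subseteq> Z"
    then show "Z \<in> F'" unfolding F'_def by auto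
  next
    fix X Z assume "X \<in> F'" "Z \<in> F'"
    then obtain A\<^sub>1 A\<^sub>2 where A: "A\<^sub>1 \<in> F" "A\<^sub>2 \<in> F" "Y \<inter> A\<^sub>1 \<subseteq> X" "Y \<inter> A\<^sub>2 \<subseteq> Z"
        and XZ: "X \<in> P" "Z \<in> P"
      unfolding F'_def by auto
    obtain u where "u \<in> F" "u \<subseteq> A\<^sub>1" "u \<subseteq> A\<^sub>2" using f(3) A(1,2) by blast
    then have "Y \<inter> u \<subseteq> X \<inter> Z" using A(3,4) by auto
    then have "X \<inter> Z \<in> F'" unfolding F'_def using Int_closed[OF XZ] \<open>u \<in> F\<close> by auto
    then show "\<exists>u\<in>F'. u \<subseteq> X \<and> u \<subseteq> Z" by (intro bexI[of _ "X \<inter> Z"]) auto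
  qed
  then have "F' = F" using uf F_sub unfolding is_ultrafilter_def by simp
  moreover have "Y \<in> F'" unfolding F'_def using Y f(2) by auto
  ultimately show ?thesis by simp
qed

lemma is_ultrafilter_if_meets_imp_mem:
  assumes f: "is_filter P (\<subseteq>) {} F"
    and mem: "\<And>D. D \<in> P \<Longrightarrow> (\<And>A. A \<in> F \<Longrightarrow> D \<inter> A \<noteq> {}) \<Longrightarrow> D \<in> F"
  shows "is_ultrafilter P (\<subseteq>) {} F"
  unfolding is_ultrafilter_def
proof (intro conjI allI impI)
  fix F' assume F': "is_filter P (\<subseteq>) {} F' \<and> F \<subseteq> F'"
  then have F'_props: "F' \<subseteq> P" "{} \<notin> F'" "\<forall>X\<in>F'. \<forall>Z\<in>F'. \<exists>u\<in>F'. u \<subseteq> X \<and> u \<subseteq> Z"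
    unfolding is_filter_def by auto
  have "D \<in> F" if D: "D \<in> F'" for D
  proof (rule mem)
    show "D \<in> P" using D F'_props(1) by blast
    fix A assume "A \<in> F"
    then obtain u where "u \<in> F'" "u \<subseteq> D" "u \<subseteq> A" using D F' F'_props(3) by blast
    then have "u = {}" if "D \<inter> A = {}" using that by blast
    then show "D \<inter> A \<noteq> {}" using F'_props(2) \<open>u \<in> F'\<close> by auto
  qed
  then show "F' = F" using F' by blast
qed (fact f)

lemma rset_meets_ES_section_extension:
  assumes ls: "labelled_space G B" and wlr: "weakly_left_resolving G B"
    and crc: "closed_rel_compl B" and filt: "filter_ES G B \<xi>"
    and D: "D \<in> B" and meets: "\<And>E. E \<in> ES_section B \<xi> a \<Longrightarrow> D \<inter> E \<noteq> {}"
    and E: "E \<in> ES_section B \<xi> a" and A: "A \<in> ES_section B \<xi> (a @ x)"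
  shows "rset G D x \<inter> A \<noteq> {}"
proof
  assume disj: "rset G D x \<inter> A = {}"
  have E': "E \<in> B" "Some (a, E, a) \<in> \<xi>" "E \<in> Bsub G B a"
    using E filter_ES_SomeD[OF filt] unfolding ES_section_def by auto
  have ED: "E - D \<in> B" using crc E'(1) D unfolding closed_rel_compl_def by blast
  have "rset G E x = rset G (E \<inter> D) x \<union> rset G (E - D) x"
    using rset_Un[of G "E \<inter> D" "E - D" x] by (simp add: Un_Diff_Int Un_commute)
  then have "rset G E x \<inter> A \<subseteq> rset G (E - D) x"
    using disj rset_mono[of "E \<inter> D" D G x] by blast
  moreover have "Some (a @ x, rset G E x \<inter> A, a @ x) \<in> \<xi>"
    using filter_ES_rset_Int[OF ls wlr filt E'(2)] A unfolding ES_section_def by simp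
  moreover have "E - D \<in> Bsub G B a" using ED E'(3) Bsub_iff[OF ls] by auto
  ultimately have "E - D \<in> ES_section B \<xi> a"
    using filter_ES_upward[OF filt] ED unfolding ES_section_def by blast
  then show False using meets by blast
qed

lemma ES_section_ultrafilter_of_extension:
  assumes ls: "labelled_space G B" and wlr: "weakly_left_resolving G B"
    and crc: "closed_rel_compl B" and filt: "filter_ES G B \<xi>"
    and uf: "is_ultrafilter (Bsub G B (a @ x)) (\<subseteq>) {} (ES_section B \<xi> (a @ x))"
    and ne: "ES_section B \<xi> a \<noteq> {}"
  shows "is_ultrafilter (Bsub G B a) (\<subseteq>) {} (ES_section B \<xi> a)"
proof (rule is_ultrafilter_if_meets_imp_mem[OF filter_ES_section_is_filter[OF ls wlr filt ne]])
  fix D assume D: "D \<in> Bsub G B a"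
    and meets: "\<And>E. E \<in> ES_section B \<xi> a \<Longrightarrow> D \<inter> E \<noteq> {}"
  have DB: "D \<in> B" "D \<subseteq> rword G a" using D Bsub_iff[OF ls] by auto
  obtain A\<^sub>0 where "A\<^sub>0 \<in> ES_section B \<xi> (a @ x)"
    using uf unfolding is_ultrafilter_def is_filter_def by auto
  then have "a @ x \<in> Lstar G" using filter_ES_SomeD[OF filt] unfolding ES_section_def by blast
  then have x: "x \<in> Lstar G" using Lstar_appendD by blast
  have "rset G D x \<in> Bsub G B (a @ x)"
    using rset_in_B[OF ls DB(1) x] rset_mono[OF DB(2), of G x] rword_append[of G a x]
      Bsub_iff[OF ls] by auto
  moreover obtain E where "E \<in> ES_section B \<xi> a" using ne by blast
  ultimately have "rset G D x \<in> ES_section B \<xi> (a @ x)"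
    by (intro ultrafilter_mem_if_meets[OF uf _ Bsub_Int_closed[OF ls]]
        rset_meets_ES_section_extension[OF ls wlr crc filt DB(1) meets])
  then show "D \<in> ES_section B \<xi> a"
    using filter_ES_upward[OF filt _ D] DB(1) unfolding ES_section_def by auto
qed

lemma rword_in_ES_section:
  assumes ls: "labelled_space G B" and filt: "filter_ES G B \<xi>"
    and A: "A \<in> ES_section B \<xi> (a @ x)" and "a \<noteq> []"
  shows "rword G a \<in> ES_section B \<xi> a"
proof -
  have A': "Some (a @ x, A, a @ x) \<in> \<xi>" using A unfolding ES_section_def by simp
  then have h: "a @ x \<in> Lstar G" "A \<in> Bsub G B (a @ x)" using filter_ES_SomeD[OF filt] by auto
  then have "a \<in> Lplus G" using Lstar_appendD \<open>a \<noteq> []\<close> unfolding Lstar_def by blast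
  then have "rword G a \<in> B" by (rule rword_in_B[OF ls])
  moreover have "A \<subseteq> rset G (rword G a) x" using h(2) Bsub_iff[OF ls] rword_append by metis
  ultimately show ?thesis
    using filter_ES_upward[OF filt A'] Bsub_iff[OF ls] unfolding ES_section_def by blast
qed

lemma wprefix_take: "m \<le> n \<Longrightarrow> take m (wprefix \<alpha> n) = wprefix \<alpha> m"
  by (cases \<alpha>) (auto simp: take_map min_def)

lemma length_wprefix: "enat m \<le> wlen \<alpha> \<Longrightarrow> length (wprefix \<alpha> m) = m"
  by (cases \<alpha>) auto

lemma wprefix_0 [simp]: "wprefix \<alpha> 0 = []"
  by (cases \<alpha>) auto

theorem mainTheorem13:
  fixes G :: "('v,'e,'a) lgraph" and B :: "'v set set"
    and \<xi> :: "('v,'a) selt set" and \<alpha> :: "'a lword" and n :: nat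
  assumes "labelled_space G B"
    and "weakly_left_resolving G B"
    and "closed_rel_compl B"
    and "filter_ES G B \<xi>"
    and "is_word_of G \<xi> \<alpha>"
    and "0 < n" and "enat n \<le> wlen \<alpha>"
    and "ultrafilter_B G B (wprefix \<alpha> n) (xi_n G B \<xi> \<alpha> n)"
  shows "(\<forall>m. 0 < m \<and> m < n \<longrightarrow> ultrafilter_B G B (wprefix \<alpha> m) (xi_n G B \<xi> \<alpha> m))
       \<and> (xi_n G B \<xi> \<alpha> 0 \<noteq> {} \<longrightarrow> ultrafilter_B G B [] (xi_n G B \<xi> \<alpha> 0))"
proof -
  have split: "wprefix \<alpha> m @ drop m (wprefix \<alpha> n) = wprefix \<alpha> n" if "m < n" for m
    using wprefix_take[of m n \<alpha>] that by (metis append_take_drop_id less_imp_le)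
  have uf_n: "is_ultrafilter (Bsub G B (wprefix \<alpha> n)) (\<subseteq>) {} (ES_section B \<xi> (wprefix \<alpha> n))"
    using assms(8) unfolding ultrafilter_B_def xi_n_eq_ES_section .
  have uf: "ultrafilter_B G B (wprefix \<alpha> m) (xi_n G B \<xi> \<alpha> m)"
    if "m < n" "ES_section B \<xi> (wprefix \<alpha> m) \<noteq> {}" for m
    using ES_section_ultrafilter_of_extension[OF assms(1-4),
        of "wprefix \<alpha> m" "drop m (wprefix \<alpha> n)"] uf_n that(2)
    unfolding ultrafilter_B_def xi_n_eq_ES_section split[OF that(1)] by blast
  obtain A where A: "A \<in> ES_section B \<xi> (wprefix \<alpha> n)"
    using uf_n unfolding is_ultrafilter_def is_filter_def by auto
  have "ES_section B \<xi> (wprefix \<alpha> m) \<noteq> {}" if m: "0 < m" "m < n" for m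
  proof -
    have "length (wprefix \<alpha> m) = m"
      using assms(7) m by (intro length_wprefix) (simp add: order.trans[of _ "enat n"])
    then have "wprefix \<alpha> m \<noteq> []" using m(1) by (metis length_0_conv less_irrefl)
    then show ?thesis
      using rword_in_ES_section[OF assms(1,4), of A "wprefix \<alpha> m" "drop m (wprefix \<alpha> n)"]
        A unfolding split[OF m(2)] by blast
  qed
  then show ?thesis using uf uf[of 0] assms(6) unfolding xi_n_eq_ES_section by auto
qed

end
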